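(* Let $F$ be any field, $N\in\mathbb{N}$, and $p,p'\in\mathbb{N}$ with $p+p'\le N+1$. Let $r\in\mathbb{N}$ satisfy $r+1\le p$ and $r+1\le p'$. Let $x\in F^{N+1}$. Then $\operatorname{rank}(H_{p,p'-1}(x))\le r$ if and only if $\operatorname{rank}(H_{p-1,p'}(x))\le r$.
   Context: $\mathbb{N}=\{0,1,2,\ldots\}$. For $N\in\mathbb{N}$, $x=(x_0,\ldots,x_N)\in F^{N+1}$ and integers $s,t\ge -1$ with $s+t\le N$, the Hankel matrix $H_{s,t}(x)$ is the $(s+1)\times(t+1)$ matrix $(x_{i+j})_{0\le i\le s,\,0\le j\le t}$. *)

theory Defs
  imports "Jordan_Normal_Form.DL_Rank"
begin

definition hankel :: "nat \<Rightarrow> nat \<Rightarrow> 'a vec \<Rightarrow> 'a mat" where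
  "hankel s t x = mat (s + 1) (t + 1) (\<lambda>(i, j). x $ (i + j))"

definition mat_rank :: "'a::field mat \<Rightarrow> nat" where
  "mat_rank A = vec_space.rank (dim_row A) A"

end

theory Submission
  imports Defs
begin

(*
  Column j of H_{s,t}(x) is the slice (x_j, ..., x_{j+s}).  Passing from H_{p,q-1} to H_{p-1,q}
  removes one entry from every slice and appends one slice; we show by induction on the number of
  columns that rank at most r < q is preserved.  If the last long slice is a combination of the
  earlier ones, then so is its tail, which is the new short slice, and cutting off the first entry
  of all columns does not raise the rank.  Otherwise the earlier long slices have rank at most
  r - 1, and the new short slice adds at most one dimension.  Transposition, which swaps the two
  indices of a Hankel matrix and preserves rank, gives the converse.
*)

definition vspan :: "nat \<Rightarrow> 'a::field vec set \<Rightarrow> 'a vec set" where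
  "vspan n = LinearCombinations.module.span class_ring (module_vec TYPE('a) n)"

definition indpt_card_le :: "nat \<Rightarrow> 'a::field vec set \<Rightarrow> nat \<Rightarrow> bool" where
  "indpt_card_le n X k \<longleftrightarrow>
    (\<forall>U \<subseteq> X. LinearCombinations.module.lin_indpt class_ring (module_vec TYPE('a) n) U \<longrightarrow> card U \<le> k)"

definition spanned_by_le :: "nat \<Rightarrow> 'a::field vec set \<Rightarrow> nat \<Rightarrow> bool" where
  "spanned_by_le n X k \<longleftrightarrow>
    (\<exists>ws. length ws \<le> k \<and> set ws \<subseteq> carrier_vec n \<and> X \<subseteq> vspan n (set ws))"

context vec_space
begin

lemma vspan_eq_span [simp]: "vspan n = span"
  by (simp add: vspan_def)

lemma in_span_list_iff:
  assumes ws: "set ws \<subseteq> carrier_vec n"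
  shows "v \<in> span (set ws) \<longleftrightarrow>
    v \<in> carrier_vec n \<and> (\<exists>c. \<forall>i<n. v $ i = (\<Sum>l<length ws. c l * ws ! l $ i))"
proof -
  have dim_ws: "\<forall>w\<in>set ws. dim_vec w = n"
    using ws by auto
  have entry: "(mat_of_cols n ws *\<^sub>v vec (length ws) c) $ i = (\<Sum>l<length ws. c l * ws ! l $ i)"
    if "i < n" for c i
  proof -
    have "(mat_of_cols n ws *\<^sub>v vec (length ws) c) $ i = (\<Sum>l<length ws. ws ! l $ i * c l)"
      using that by (auto simp: mult_mat_vec_def scalar_prod_def atLeast0LessThan mat_of_cols_def
          intro!: sum.cong)
    then show ?thesis
      by (simp add: mult.commute)
  qed
  have "v \<in> span (set ws) \<longleftrightarrow> (\<exists>c. v = mat_of_cols n ws *\<^sub>v vec (length ws) c)"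
    by (auto simp: span_list_as_span[OF ws, symmetric] span_list_def
        lincomb_list_as_mat_mult[OF dim_ws])
  also have "\<dots> \<longleftrightarrow> v \<in> carrier_vec n \<and> (\<exists>c. \<forall>i<n. v $ i = (\<Sum>l<length ws. c l * ws ! l $ i))"
  proof
    assume "\<exists>c. v = mat_of_cols n ws *\<^sub>v vec (length ws) c"
    then obtain c where v: "v = mat_of_cols n ws *\<^sub>v vec (length ws) c" ..
    show "v \<in> carrier_vec n \<and> (\<exists>c. \<forall>i<n. v $ i = (\<Sum>l<length ws. c l * ws ! l $ i))"
    proof (intro conjI exI allI impI)
      show "v \<in> carrier_vec n"
        unfolding v by (rule mult_mat_vec_carrier[OF mat_of_cols_carrier(1) vec_carrier])
      show "v $ i = (\<Sum>l<length ws. c l * ws ! l $ i)" if "i < n" for i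
        unfolding v using that by (rule entry)
    qed
  next
    assume "v \<in> carrier_vec n \<and> (\<exists>c. \<forall>i<n. v $ i = (\<Sum>l<length ws. c l * ws ! l $ i))"
    then obtain c where "v \<in> carrier_vec n" "\<forall>i<n. v $ i = (\<Sum>l<length ws. c l * ws ! l $ i)"
      by blast
    then have "v = mat_of_cols n ws *\<^sub>v vec (length ws) c"
      using entry by (intro eq_vecI) auto
    then show "\<exists>c. v = mat_of_cols n ws *\<^sub>v vec (length ws) c" by blast
  qed
  finally show ?thesis .
qed

lemma lin_indpt_empty: "lin_indpt {}"
  by (rule finite_lin_indpt2) auto

lemma card_le_length_if_subset_span:
  assumes "set ws \<subseteq> carrier_vec n" "finite U" "lin_indpt U" "U \<subseteq> span (set ws)"
  shows "card U \<le> length ws"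
proof -
  from replacement[OF assms(2) List.finite_set assms(1,3,4)]
  have "card U \<le> card (set ws)"
    by (elim exE conjE) linarith
  then show ?thesis
    using card_length order_trans by blast
qed

lemma maximal_indpt_subset_spans:
  fixes X :: "'a vec set"
  assumes X: "X \<subseteq> carrier_vec n" and S: "maximal S (\<lambda>T. T \<subseteq> X \<and> lin_indpt T)"
  shows "X \<subseteq> span S"
proof
  fix v assume v: "v \<in> X"
  have "S \<subseteq> X" "lin_indpt S"
    using S unfolding maximal_def by auto
  then have SC: "S \<subseteq> carrier_vec n"
    using X by auto
  show "v \<in> span S"
  proof (rule ccontr)
    assume v_out: "v \<notin> span S"
    then have "v \<notin> S"
      using in_own_span[OF SC] by auto
    then have "lin_indpt (S \<union> {v})"
      using lin_dep_iff_in_span[OF SC \<open>lin_indpt S\<close>] v_out v X by auto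
    then have "S \<union> {v} = S"
      using S \<open>S \<subseteq> X\<close> v unfolding maximal_def by blast
    then show False
      using \<open>v \<notin> S\<close> by auto
  qed
qed

lemma indpt_card_le_iff_spanned_by_le:
  fixes X :: "'a vec set"
  assumes X: "finite X" "X \<subseteq> carrier_vec n"
  shows "indpt_card_le n X k \<longleftrightarrow> spanned_by_le n X k"
proof
  assume bound: "indpt_card_le n X k"
  obtain S where S: "maximal S (\<lambda>T. T \<subseteq> X \<and> lin_indpt T)" "finite S"
    using maximal_exists_superset[of X "\<lambda>T. T \<subseteq> X \<and> lin_indpt T" "{}"] X(1)
      lin_indpt_empty by auto
  have "S \<subseteq> X" "lin_indpt S"
    using S(1) unfolding maximal_def by auto
  obtain ws where ws: "set ws = S" "distinct ws"
    using finite_distinct_list[OF S(2)] by blast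
  have "card S \<le> k"
    using bound \<open>S \<subseteq> X\<close> \<open>lin_indpt S\<close> unfolding indpt_card_le_def by blast
  then have "length ws \<le> k"
    using distinct_card[OF ws(2)] ws(1) by simp
  moreover have "X \<subseteq> span (set ws)"
    using maximal_indpt_subset_spans[OF X(2) S(1)] ws(1) by simp
  ultimately show "spanned_by_le n X k"
    unfolding spanned_by_le_def using ws(1) \<open>S \<subseteq> X\<close> X(2) by auto
next
  assume "spanned_by_le n X k"
  then obtain ws where ws: "length ws \<le> k" "set ws \<subseteq> carrier_vec n" "X \<subseteq> span (set ws)"
    unfolding spanned_by_le_def by auto
  show "indpt_card_le n X k"
    unfolding indpt_card_le_def
  proof (intro allI impI)
    fix U assume "U \<subseteq> X" "lin_indpt U"
    then have "card U \<le> length ws"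
      using card_le_length_if_subset_span[OF ws(2)] ws(3) finite_subset[OF _ X(1)] by blast
    then show "card U \<le> k"
      using ws(1) by linarith
  qed
qed

lemma rank_le_iff_indpt_card_le:
  assumes A: "A \<in> carrier_mat n m"
  shows "rank A \<le> k \<longleftrightarrow> indpt_card_le n (set (cols A)) k"
proof -
  obtain S where S: "maximal S (\<lambda>T. T \<subseteq> set (cols A) \<and> lin_indpt T)"
    using maximal_exists_superset[of "set (cols A)" "\<lambda>T. T \<subseteq> set (cols A) \<and> lin_indpt T" "{}"]
      lin_indpt_empty by auto
  show ?thesis
  proof
    assume "rank A \<le> k"
    then show "indpt_card_le n (set (cols A)) k"
      unfolding indpt_card_le_def using rank_ge_card_indpt[OF A] by (meson order_trans)
  next
    assume "indpt_card_le n (set (cols A)) k"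
    then show "rank A \<le> k"
      using S rank_card_indpt[OF A S] unfolding indpt_card_le_def maximal_def by auto
  qed
qed

lemma indpt_card_le_insert:
  fixes X :: "'a vec set"
  assumes X: "finite X" "X \<subseteq> carrier_vec n" and c: "c \<in> carrier_vec n" "c \<notin> span X"
    and bound: "indpt_card_le n (insert c X) k"
  shows "0 < k \<and> indpt_card_le n X (k - 1)"
proof -
  have extend: "card U < k" if U: "U \<subseteq> X" "lin_indpt U" for U
  proof -
    have UC: "U \<subseteq> carrier_vec n"
      using U X by auto
    have "c \<notin> span U"
      using span_is_monotone[OF U(1)] c(2) by auto
    then have "c \<notin> U"
      using in_own_span[OF UC] by blast
    have "lin_indpt (insert c U)"
      using lin_dep_iff_in_span[OF UC U(2) c(1) \<open>c \<notin> U\<close>] \<open>c \<notin> span U\<close> by simp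
    moreover have "insert c U \<subseteq> insert c X"
      using U(1) by blast
    ultimately have "card (insert c U) \<le> k"
      using bound unfolding indpt_card_le_def by blast
    then show ?thesis
      using \<open>c \<notin> U\<close> finite_subset[OF U(1) X(1)] by simp
  qed
  have "0 < k"
    using extend[of "{}"] lin_indpt_empty by simp
  moreover have "indpt_card_le n X (k - 1)"
    unfolding indpt_card_le_def
  proof (intro allI impI)
    fix U assume "U \<subseteq> X" "lin_indpt U"
    then show "card U \<le> k - 1"
      using extend[of U] by linarith
  qed
  ultimately show ?thesis ..
qed

lemma spanned_by_le_insert:
  fixes X :: "'a vec set"
  assumes "spanned_by_le n X k" "v \<in> carrier_vec n"
  shows "spanned_by_le n (insert v X) (Suc k)"
proof -
  obtain ws where ws: "length ws \<le> k" "set ws \<subseteq> carrier_vec n" "X \<subseteq> span (set ws)"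
    using assms(1) unfolding spanned_by_le_def by auto
  have "set (v # ws) \<subseteq> span (set (v # ws))"
    using ws(2) assms(2) by (intro in_own_span) auto
  moreover have "span (set ws) \<subseteq> span (set (v # ws))"
    by (rule span_is_monotone) auto
  ultimately have "insert v X \<subseteq> span (set (v # ws))"
    using ws(3) by auto
  then show ?thesis
    unfolding spanned_by_le_def using ws(1,2) assms(2) by (intro exI[of _ "v # ws"]) auto
qed

lemma spanned_by_le_insert_in_span:
  fixes X Y :: "'a vec set"
  assumes "spanned_by_le n X k" "Y \<subseteq> X" "v \<in> span Y"
  shows "spanned_by_le n (insert v X) k"
proof -
  obtain ws where ws: "length ws \<le> k" "set ws \<subseteq> carrier_vec n" "X \<subseteq> span (set ws)"
    using assms(1) unfolding spanned_by_le_def by auto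
  have "span Y \<subseteq> span (set ws)"
    using span_subsetI[OF ws(2)] assms(2) ws(3) by blast
  then show ?thesis
    unfolding spanned_by_le_def using ws assms(3) by auto
qed

end

definition slice_vec :: "nat \<Rightarrow> nat \<Rightarrow> 'a vec \<Rightarrow> 'a vec" where
  "slice_vec off L v = vec L (\<lambda>i. v $ (off + i))"

lemma slice_vec_carrier [simp]: "slice_vec off L v \<in> carrier_vec L"
  by (simp add: slice_vec_def)

lemma slice_vec_slice_vec [simp]:
  "off + L \<le> M \<Longrightarrow> slice_vec off L (slice_vec j M v) = slice_vec (j + off) L v"
  by (auto simp: slice_vec_def add.assoc)

lemma slice_vec_in_vspan:
  fixes ws :: "'a::field vec list"
  assumes ws: "set ws \<subseteq> carrier_vec n" and v: "v \<in> vspan n (set ws)" and L: "off + L \<le> n"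
  shows "slice_vec off L v \<in> vspan L (slice_vec off L ` set ws)"
proof -
  obtain c where c: "\<forall>i<n. v $ i = (\<Sum>l<length ws. c l * ws ! l $ i)"
    using v vec_space.in_span_list_iff[OF ws] by (auto simp: vspan_def)
  have "slice_vec off L v $ i = (\<Sum>l<length ws. c l * map (slice_vec off L) ws ! l $ i)"
    if "i < L" for i
    using that c L by (auto simp: slice_vec_def intro!: sum.cong)
  then have "slice_vec off L v \<in> vspan L (set (map (slice_vec off L) ws))"
    unfolding vspan_def by (intro iffD2[OF vec_space.in_span_list_iff]) auto
  then show ?thesis
    by simp
qed

lemma spanned_by_le_slice:
  assumes spanned: "spanned_by_le n X k" and L: "off + L \<le> n"
  shows "spanned_by_le L (slice_vec off L ` X) k"
proof -
  obtain ws where ws: "length ws \<le> k" "set ws \<subseteq> carrier_vec n" "X \<subseteq> vspan n (set ws)"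
    using spanned unfolding spanned_by_le_def by auto
  have "slice_vec off L ` X \<subseteq> vspan L (set (map (slice_vec off L) ws))"
    using slice_vec_in_vspan[OF ws(2) _ L] ws(3) by auto
  then show ?thesis
    unfolding spanned_by_le_def using ws(1) by (intro exI[of _ "map (slice_vec off L) ws"]) auto
qed

lemma spanned_by_le_cols_transpose:
  fixes A :: "'a::field mat"
  assumes A: "A \<in> carrier_mat n m" and spanned: "spanned_by_le n (set (cols A)) k"
  shows "spanned_by_le m (set (cols A\<^sup>T)) k"
proof -
  obtain ws where ws: "length ws \<le> k" "set ws \<subseteq> carrier_vec n" "set (cols A) \<subseteq> vspan n (set ws)"
    using spanned unfolding spanned_by_le_def by blast
  have "\<forall>j\<in>{..<m}. \<exists>g. \<forall>i<n. A $$ (i, j) = (\<Sum>l<length ws. g l * ws ! l $ i)"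
  proof
    fix j assume j: "j \<in> {..<m}"
    then have "col A j \<in> vspan n (set ws)"
      using A ws(3) by (auto simp: cols_def)
    then obtain g where "\<forall>i<n. col A j $ i = (\<Sum>l<length ws. g l * ws ! l $ i)"
      using vec_space.in_span_list_iff[OF ws(2), of "col A j"] unfolding vspan_def by blast
    then show "\<exists>g. \<forall>i<n. A $$ (i, j) = (\<Sum>l<length ws. g l * ws ! l $ i)"
      using A j by auto
  qed
  then obtain C where C: "\<forall>j\<in>{..<m}. \<forall>i<n. A $$ (i, j) = (\<Sum>l<length ws. C j l * ws ! l $ i)"
    by (rule bchoice[elim_format]) blast
  \<comment> \<open>Writing \<open>A = W C\<close> with the columns \<open>ws\<close> of \<open>W\<close>, the rows of \<open>C\<close> span the columns of \<open>A\<^sup>T = C\<^sup>T W\<^sup>T\<close>.\<close>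
  define rows_C where "rows_C = map (\<lambda>l. vec m (\<lambda>j. C j l)) [0..<length ws]"
  have rows_C_carrier: "set rows_C \<subseteq> carrier_vec m"
    by (auto simp: rows_C_def)
  have col_in_span: "col A\<^sup>T i \<in> vspan m (set rows_C)" if i: "i < n" for i
  proof -
    have coeffs: "col A\<^sup>T i $ j = (\<Sum>l<length rows_C. ws ! l $ i * rows_C ! l $ j)"
      if j: "j < m" for j
    proof -
      have "col A\<^sup>T i $ j = A $$ (i, j)"
        using A i j by simp
      also have "\<dots> = (\<Sum>l<length ws. C j l * ws ! l $ i)"
        using C i j by simp
      also have "\<dots> = (\<Sum>l<length rows_C. ws ! l $ i * rows_C ! l $ j)"
        unfolding rows_C_def length_map length_upt using j by (intro sum.cong) auto
      finally show ?thesis .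
    qed
    have "col A\<^sup>T i \<in> carrier_vec m"
      using A by (intro carrier_vecI) simp
    then show ?thesis
      unfolding vspan_def using coeffs
      by (intro iffD2[OF vec_space.in_span_list_iff[OF rows_C_carrier]] conjI exI[of _ "\<lambda>l. ws ! l $ i"])
        auto
  qed
  have "set (cols A\<^sup>T) \<subseteq> vspan m (set rows_C)"
    unfolding cols_def using A col_in_span by auto
  moreover have "length rows_C \<le> k"
    using ws(1) by (simp add: rows_C_def)
  ultimately show ?thesis
    unfolding spanned_by_le_def using rows_C_carrier by blast
qed

lemma mat_rank_le_iff_spanned_by_le:
  fixes A :: "'a::field mat"
  assumes A: "A \<in> carrier_mat n m"
  shows "mat_rank A \<le> k \<longleftrightarrow> spanned_by_le n (set (cols A)) k"
proof -
  have cols_carrier: "set (cols A) \<subseteq> carrier_vec n"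
    using cols_dim[of A] A by simp
  show ?thesis
    using vec_space.rank_le_iff_indpt_card_le[OF A]
      vec_space.indpt_card_le_iff_spanned_by_le[OF List.finite_set cols_carrier] A
    unfolding mat_rank_def by simp
qed

lemma mat_rank_transpose: "mat_rank A\<^sup>T = mat_rank (A :: 'a::field mat)"
proof -
  have le: "mat_rank B\<^sup>T \<le> mat_rank B" for B :: "'a mat"
  proof -
    have "spanned_by_le (dim_row B) (set (cols B)) (mat_rank B)"
      using mat_rank_le_iff_spanned_by_le[OF carrier_mat_triv] by blast
    then have "spanned_by_le (dim_col B) (set (cols B\<^sup>T)) (mat_rank B)"
      by (rule spanned_by_le_cols_transpose[OF carrier_mat_triv])
    then show ?thesis
      using mat_rank_le_iff_spanned_by_le[of "B\<^sup>T" "dim_col B" "dim_row B"] by simp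
  qed
  show ?thesis
    using le[of A] le[of "A\<^sup>T"] by simp
qed

lemma hankel_carrier: "hankel s t x \<in> carrier_mat (Suc s) (Suc t)"
  by (simp add: hankel_def)

lemma hankel_transpose: "(hankel s t x)\<^sup>T = hankel t s x"
  by (rule eq_matI) (auto simp: hankel_def add.commute)

lemma mat_rank_hankel_swap: "mat_rank (hankel s t x) = mat_rank (hankel t s x)"
  by (metis hankel_transpose mat_rank_transpose)

lemma set_cols_hankel: "set (cols (hankel s t x)) = (\<lambda>j. slice_vec j (Suc s) x) ` {..t}"
proof -
  have "dim_col (hankel s t x) = Suc t"
    by (simp add: hankel_def)
  then have "set (cols (hankel s t x)) = col (hankel s t x) ` {..t}"
    unfolding cols_def set_map set_upt atLeast0LessThan by (simp add: lessThan_Suc_atMost)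
  also have "\<dots> = (\<lambda>j. slice_vec j (Suc s) x) ` {..t}"
    by (rule image_cong) (auto simp: hankel_def slice_vec_def add.commute)
  finally show ?thesis .
qed

lemma spanned_by_le_shorter_slices:
  fixes x :: "'a::field vec"
  assumes "indpt_card_le (Suc p) ((\<lambda>j. slice_vec j (Suc p) x) ` {..<m}) k" and "k < m"
  shows "spanned_by_le p ((\<lambda>j. slice_vec j p x) ` {..m}) k"
  using assms
proof (induction m arbitrary: k)
  case 0
  then show ?case by simp
next
  case (Suc m)
  let ?long = "\<lambda>j. slice_vec j (Suc p) x" and ?short = "\<lambda>j. slice_vec j p x"
  have long_carrier: "?long ` J \<subseteq> carrier_vec (Suc p)" for J
    by auto
  have short_Suc: "?short ` {..Suc m} = insert (?short (Suc m)) (?short ` {..m})"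
    by (simp add: atMost_Suc)
  show ?case
  proof (cases "?long m \<in> vspan (Suc p) (?long ` {..<m})")
    case True
    \<comment> \<open>The heads of the long slices are the short slices \<open>0..m\<close>, and the tail of slice \<open>m\<close>, which
      is the short slice \<open>m + 1\<close>, is a combination of the tails of slices \<open>0..m-1\<close>.\<close>
    have "spanned_by_le (Suc p) (?long ` {..<Suc m}) k"
      using Suc.prems(1) vec_space.indpt_card_le_iff_spanned_by_le[OF _ long_carrier] by blast
    then have "spanned_by_le p (slice_vec 0 p ` ?long ` {..<Suc m}) k"
      by (rule spanned_by_le_slice) simp
    then have heads: "spanned_by_le p (?short ` {..m}) k"
      by (simp add: image_image lessThan_Suc_atMost)
    have "?short (Suc m) \<in> vspan p (slice_vec 1 p ` set (map ?long [0..<m]))"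
      using slice_vec_in_vspan[of "map ?long [0..<m]" "Suc p" "?long m" 1 p] True long_carrier
      by (simp add: atLeast0LessThan)
    also have "slice_vec 1 p ` set (map ?long [0..<m]) = ?short ` Suc ` {..<m}"
      by (auto simp: image_image)
    finally have "?short (Suc m) \<in> vspan p (?short ` Suc ` {..<m})" .
    then have "spanned_by_le p (insert (?short (Suc m)) (?short ` {..m})) k"
      by (intro vec_space.spanned_by_le_insert_in_span[OF heads]) (auto simp: vspan_def)
    then show ?thesis
      by (simp only: short_Suc)
  next
    case False
    have "indpt_card_le (Suc p) (insert (?long m) (?long ` {..<m})) k"
      using Suc.prems(1) by (simp add: lessThan_Suc)
    then have smaller: "0 < k \<and> indpt_card_le (Suc p) (?long ` {..<m}) (k - 1)"
      by (rule vec_space.indpt_card_le_insert[OF finite_imageI[OF finite_lessThan] long_carrier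
            slice_vec_carrier False[unfolded vspan_def]])
    moreover have "k - 1 < m"
      using Suc.prems(2) smaller by linarith
    ultimately have "spanned_by_le p (?short ` {..m}) (k - 1)" "Suc (k - 1) = k"
      using Suc.IH by auto
    then show ?thesis
      using vec_space.spanned_by_le_insert[of p "?short ` {..m}" "k - 1" "?short (Suc m)"]
      by (simp add: short_Suc)
  qed
qed

lemma mat_rank_hankel_le_shift:
  fixes x :: "'a::field vec"
  assumes "r \<le> q" and "mat_rank (hankel (Suc p) q x) \<le> r"
  shows "mat_rank (hankel p (Suc q) x) \<le> r"
proof -
  let ?slices = "\<lambda>L. (\<lambda>j. slice_vec j L x)"
  have "spanned_by_le (Suc (Suc p)) (?slices (Suc (Suc p)) ` {..<Suc q}) r"
    using assms(2) mat_rank_le_iff_spanned_by_le[OF hankel_carrier, of "Suc p" q x r]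
    by (simp add: set_cols_hankel lessThan_Suc_atMost)
  moreover have "?slices (Suc (Suc p)) ` {..<Suc q} \<subseteq> carrier_vec (Suc (Suc p))"
    by auto
  ultimately have "indpt_card_le (Suc (Suc p)) (?slices (Suc (Suc p)) ` {..<Suc q}) r"
    using vec_space.indpt_card_le_iff_spanned_by_le[OF finite_imageI[OF finite_lessThan]] by blast
  then have "spanned_by_le (Suc p) (?slices (Suc p) ` {..Suc q}) r"
    using assms(1) by (intro spanned_by_le_shorter_slices) auto
  then show ?thesis
    using mat_rank_le_iff_spanned_by_le[OF hankel_carrier, of p "Suc q" x r] by (simp add: set_cols_hankel)
qed

theorem lemma9:
  fixes N p p' r :: nat and x :: "'a::field vec"
  assumes "dim_vec x = N + 1"
    and "p + p' \<le> N + 1"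
    and "r + 1 \<le> p" and "r + 1 \<le> p'"
  shows "mat_rank (hankel p (p' - 1) x) \<le> r \<longleftrightarrow> mat_rank (hankel (p - 1) p' x) \<le> r"
proof -
  \<comment> \<open>The bounds on \<open>dim_vec x\<close> are not needed: entries beyond the end of \<open>x\<close> are unspecified
    but fixed, and the argument never inspects them.\<close>
  obtain s t where p: "p = Suc s" and p': "p' = Suc t"
    using assms(3,4) by (cases p; cases p') auto
  have "mat_rank (hankel (Suc s) t x) \<le> r \<Longrightarrow> mat_rank (hankel s (Suc t) x) \<le> r"
    using mat_rank_hankel_le_shift[of r t s x] assms(4) p' by simp
  moreover have "mat_rank (hankel s (Suc t) x) \<le> r \<Longrightarrow> mat_rank (hankel (Suc s) t x) \<le> r"
    using mat_rank_hankel_le_shift[of r s t x] assms(3) p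
    unfolding mat_rank_hankel_swap[of s "Suc t"] mat_rank_hankel_swap[of "Suc s" t] by simp
  ultimately show ?thesis
    using p p' by auto
qed

end
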